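(* Let $\varphi\in\mathcal{L}$. If there is a finite quasi-notional graded doxastic model (QNGDM) $M$ and a world $w$ of $M$ with $(M,w)\models\varphi$, then there exists a finite notional graded doxastic model (NGDM) $M''$ and a world $w''$ of $M''$ with $(M'',w'')\models\varphi$.
   Context: Fix a countably infinite set of atoms $\mathit{Atm}$ and a finite set of agents $\mathit{Agt}=\{1,\dots,n\}$; a group is a non-empty subset $J\subseteq\mathit{Agt}$, and $2^{\mathit{Agt}*}$ denotes the set of groups. $\mathbb{N}_0$ (resp. $\mathbb{N}_1$) are the naturals with (resp. without) $0$, and $\mathbb{N}_0^{\omega}=\mathbb{N}_0\cup\{\omega\}$, $\mathbb{N}_1^{\omega}=\mathbb{N}_1\cup\{\omega\}$ with $\omega$ an infinite element. A multiset over $X$ is a function $f:X\to\mathbb{N}_0^{\omega}$; its support is $\{x:f(x)>0\}$. A possibly infinite sum of grades equals the sum of its non-zero summands if there are finitely many of them and none is $\omega$, and $\omega$ otherwise. For $k\in\mathbb{N}_0$ and a group $J$, $P(J,k)$ is the set of functions $\delta:J\to\mathbb{N}_0$ with $\sum_{i\in J}\delta(i)=k$. $\mathcal{L}_0$: $\alpha::=p\mid\neg\alpha\mid\alpha\wedge\alpha\mid\triangle_i^k\alpha$ ($p\in\mathit{Atm}$, $i\in\mathit{Agt}$, $k\in\mathbb{N}_1^{\omega}$). $\mathcal{L}$: $\varphi::=\alpha\mid\neg\varphi\mid\varphi\wedge\varphi\mid\Box_J^k\varphi$ ($\alpha\in\mathcal{L}_0$, $J$ a group, $k\in\mathbb{N}_0$).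 Consider tuples $M=(W,\mathcal{D},\rho,\mathcal{V})$ with $W$ a set of worlds, $\mathcal{D}:\mathit{Agt}\times W\to$ (multisets over $\mathcal{L}_0$), $\rho:2^{\mathit{Agt}*}\times W\times W\to\mathbb{N}_0^{\omega}$, $\mathcal{V}:\mathit{Atm}\to 2^W$, with satisfaction $(M,w)\models p$ iff $w\in\mathcal{V}(p)$; Boolean clauses as usual; $(M,w)\models\triangle_i^k\alpha$ iff $\mathcal{D}(i,w)(\alpha)\ge k$; $(M,w)\models\Box_J^k\varphi$ iff for all $u\in W$ with $\rho(J,w,u)\le k$, $(M,u)\models\varphi$. Such an $M$ is an NGDM if for all groups $J$ and $w,u\in W$: $\rho(J,w,u)=\sum_{\alpha\in\mathcal{L}_0,(M,u)\not\models\alpha}\sum_{i\in J}\mathcal{D}(i,w)(\alpha)$. Such an $M$ is a QNGDM if for every group $J$ and $w,u\in W$ with $\rho(J,w,u)\ne\omega$: (i) $\rho(J,w,u)\ge\sum_{\alpha\in\mathcal{L}_0,(M,u)\not\models\alpha}\sum_{i\in J}\mathcal{D}(i,w)(\alpha)$; and (ii) there is $\delta\in P(J,\rho(J,w,u))$ with $\sum_{i\in J'}\delta(i)\ge\rho(J',w,u)$ for every non-empty $J'\subset J$. A model is finite if $W$ is finite and each $\mathcal{D}(i,w)$ has finite support. *)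

theory Defs
  imports Main "HOL-Library.Extended_Nat"
begin

(* Atoms: nat (countably infinite). Agents: a finite type 'agt.
   Grades in N_0^omega are enat; the N_1^omega restriction on the
   grade of triangle formulas is imposed by well-formedness. *)

datatype 'agt fm0 =
    Atom nat
  | Neg0 "'agt fm0"
  | Conj0 "'agt fm0" "'agt fm0"
  | Tri 'agt enat "'agt fm0"

datatype 'agt fm =
    Base "'agt fm0"
  | Neg "'agt fm"
  | Conj "'agt fm" "'agt fm"
  | Box "'agt set" nat "'agt fm"

fun wf0 :: "'agt fm0 \<Rightarrow> bool" where
  "wf0 (Atom p) = True"
| "wf0 (Neg0 a) = wf0 a"
| "wf0 (Conj0 a b) = (wf0 a \<and> wf0 b)"
| "wf0 (Tri i k a) = (k \<ge> 1 \<and> wf0 a)"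

fun wf :: "'agt fm \<Rightarrow> bool" where
  "wf (Base a) = wf0 a"
| "wf (Neg f) = wf f"
| "wf (Conj f g) = (wf f \<and> wf g)"
| "wf (Box J k f) = (J \<noteq> {} \<and> wf f)"

record ('agt, 'w) model =
  W :: "'w set"
  D :: "'agt \<Rightarrow> 'w \<Rightarrow> 'agt fm0 \<Rightarrow> enat"
  rho :: "'agt set \<Rightarrow> 'w \<Rightarrow> 'w \<Rightarrow> enat"
  V :: "nat \<Rightarrow> 'w set"

fun sat0 :: "('agt, 'w) model \<Rightarrow> 'w \<Rightarrow> 'agt fm0 \<Rightarrow> bool" where
  "sat0 M w (Atom p) = (w \<in> V M p)"
| "sat0 M w (Neg0 a) = (\<not> sat0 M w a)"
| "sat0 M w (Conj0 a b) = (sat0 M w a \<and> sat0 M w b)"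
| "sat0 M w (Tri i k a) = (D M i w a \<ge> k)"

fun sat :: "('agt, 'w) model \<Rightarrow> 'w \<Rightarrow> 'agt fm \<Rightarrow> bool" where
  "sat M w (Base a) = sat0 M w a"
| "sat M w (Neg f) = (\<not> sat M w f)"
| "sat M w (Conj f g) = (sat M w f \<and> sat M w g)"
| "sat M w (Box J k f) = (\<forall>u \<in> W M. rho M J w u \<le> enat k \<longrightarrow> sat M u f)"

definition gsum :: "('x \<Rightarrow> enat) \<Rightarrow> 'x set \<Rightarrow> enat" where
  "gsum f A = (if finite {x \<in> A. f x \<noteq> 0} \<and> (\<forall>x \<in> A. f x \<noteq> \<infinity>)
               then sum f {x \<in> A. f x \<noteq> 0} else \<infinity>)"

definition doxsum :: "('agt, 'w) model \<Rightarrow> 'agt set \<Rightarrow> 'w \<Rightarrow> 'w \<Rightarrow> enat" where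
  "doxsum M J w u =
     gsum (\<lambda>a. gsum (\<lambda>i. D M i w a) J) {a. wf0 a \<and> \<not> sat0 M u a}"

definition NGDM :: "('agt, 'w) model \<Rightarrow> bool" where
  "NGDM M \<longleftrightarrow> (\<forall>J w u. J \<noteq> {} \<longrightarrow> w \<in> W M \<longrightarrow> u \<in> W M \<longrightarrow>
                 rho M J w u = doxsum M J w u)"

definition QNGDM :: "('agt, 'w) model \<Rightarrow> bool" where
  "QNGDM M \<longleftrightarrow> (\<forall>J w u. J \<noteq> {} \<longrightarrow> w \<in> W M \<longrightarrow> u \<in> W M \<longrightarrow> rho M J w u \<noteq> \<infinity> \<longrightarrow>
      rho M J w u \<ge> doxsum M J w u \<and>
      (\<exists>\<delta> :: 'agt \<Rightarrow> nat. enat (sum \<delta> J) = rho M J w u \<and>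
          (\<forall>J'. J' \<noteq> {} \<longrightarrow> J' \<subset> J \<longrightarrow> enat (sum \<delta> J') \<ge> rho M J' w u)))"

definition finite_model :: "('agt, 'w) model \<Rightarrow> bool" where
  "finite_model M \<longleftrightarrow> finite (W M) \<and>
     (\<forall>i. \<forall>w \<in> W M. finite {a. wf0 a \<and> D M i w a > 0})"

end

theory Submission
  imports Defs
begin

(* A quasi-notional model is made notional by adding formulas. Every world u is copied once for
   every group Y, and the copy y = (u, Y) gets a fresh atom true only there, so that the formula
   fresh y is false exactly at y. Condition (ii) splits rho(Y, v, u) into shares delta_i; agent i
   at v gives fresh y whatever weight it lacks for its total disbelief in y to reach delta_i, and
   condition (i) for singleton groups ensures that its disbelief never exceeds delta_i already.
   The notional distance from a copy of v to (u, J) is then exactly rho(J, v, u), and to every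
   other copy of u at least rho(J, v, u), so box formulas over the old atoms keep their truth
   values. Finally the finitely many worlds are renamed into nat. *)

lemma sum_enat: "(\<Sum>x\<in>A. enat (f x)) = enat (sum f A)"
  by (simp flip: of_nat_eq_enat)

lemma sum_enat_eq_infinity:
  "finite A \<Longrightarrow> x \<in> A \<Longrightarrow> f x = \<infinity> \<Longrightarrow> (\<Sum>x\<in>A. f x :: enat) = \<infinity>"
  by (simp add: sum.remove)

lemma enat_add_diff_eq_max: "(a::enat) + (b - a) = max a b"
  by (cases a; cases b) auto

lemma gsum_eq_sum:
  assumes "finite B" and "{x \<in> A. f x \<noteq> 0} \<subseteq> B" and "B \<subseteq> A"
  shows "gsum f A = sum f B"
proof -
  have support_finite: "finite {x \<in> A. f x \<noteq> 0}"
    using assms(1,2) by (rule finite_subset[rotated])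
  have sum_eq: "sum f {x \<in> A. f x \<noteq> 0} = sum f B"
    by (rule sum.mono_neutral_left[OF assms(1,2)]) (use assms(3) in blast)
  show ?thesis
  proof (cases "\<forall>x \<in> A. f x \<noteq> \<infinity>")
    case True
    then show ?thesis using support_finite sum_eq by (simp add: gsum_def)
  next
    case False
    then obtain x where "x \<in> A" "f x = \<infinity>" by blast
    then have "sum f B = \<infinity>" using assms(1,2) by (intro sum_enat_eq_infinity) auto
    moreover have "gsum f A = \<infinity>" using False by (auto simp: gsum_def)
    ultimately show ?thesis by simp
  qed
qed

lemma doxsum_eq_sum:
  assumes "finite J" and "finite B"
    and "\<And>a i. \<lbrakk>wf0 a; \<not> sat0 M u a; i \<in> J; D M i w a \<noteq> 0\<rbrakk> \<Longrightarrow> a \<in> B"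
    and "\<And>a. a \<in> B \<Longrightarrow> wf0 a \<and> \<not> sat0 M u a"
  shows "doxsum M J w u = (\<Sum>i\<in>J. \<Sum>a\<in>B. D M i w a)"
proof -
  have "doxsum M J w u = gsum (\<lambda>a. \<Sum>i\<in>J. D M i w a) {a. wf0 a \<and> \<not> sat0 M u a}"
    unfolding doxsum_def using gsum_eq_sum[OF assms(1)] by simp
  also have "\<dots> = (\<Sum>a\<in>B. \<Sum>i\<in>J. D M i w a)"
  proof (rule gsum_eq_sum)
    show "{a \<in> {a. wf0 a \<and> \<not> sat0 M u a}. (\<Sum>i\<in>J. D M i w a) \<noteq> 0} \<subseteq> B"
      using assms(3) by (fastforce elim: sum.not_neutral_contains_not_neutral)
  qed (use assms(2,4) in auto)
  also have "\<dots> = (\<Sum>i\<in>J. \<Sum>a\<in>B. D M i w a)"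
    by (rule sum.swap)
  finally show ?thesis .
qed

fun atoms0 :: "'agt fm0 \<Rightarrow> nat set" where
  "atoms0 (Atom p) = {p}"
| "atoms0 (Neg0 a) = atoms0 a"
| "atoms0 (Conj0 a b) = atoms0 a \<union> atoms0 b"
| "atoms0 (Tri i k a) = atoms0 a"

fun atoms :: "'agt fm \<Rightarrow> nat set" where
  "atoms (Base a) = atoms0 a"
| "atoms (Neg \<phi>) = atoms \<phi>"
| "atoms (Conj \<phi> \<psi>) = atoms \<phi> \<union> atoms \<psi>"
| "atoms (Box J k \<phi>) = atoms \<phi>"

lemma finite_atoms0 [simp]: "finite (atoms0 a)"
  by (induction a) auto

lemma finite_atoms [simp]: "finite (atoms \<phi>)"
  by (induction \<phi>) auto

definition support :: "('agt, 'w) model \<Rightarrow> 'w \<Rightarrow> 'agt fm0 set" where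
  "support M w = {a. wf0 a \<and> (\<exists>i. 0 < D M i w a)}"

lemma finite_support:
  fixes M :: "('agt::finite, 'w) model"
  assumes "finite_model M" and "w \<in> W M"
  shows "finite (support M w)"
proof -
  have "support M w = (\<Union>i. {a. wf0 a \<and> 0 < D M i w a})"
    by (auto simp: support_def)
  then show ?thesis
    using assms by (simp add: finite_model_def)
qed

definition rho_split :: "('agt, 'w) model \<Rightarrow> 'w \<Rightarrow> 'w \<Rightarrow> 'agt set \<Rightarrow> ('agt \<Rightarrow> nat) \<Rightarrow> bool" where
  "rho_split M w u J \<delta> \<longleftrightarrow> enat (sum \<delta> J) = rho M J w u \<and>
     (\<forall>J'. J' \<noteq> {} \<longrightarrow> J' \<subset> J \<longrightarrow> rho M J' w u \<le> enat (sum \<delta> J'))"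

lemma rho_le_sum_rho_split:
  assumes "rho_split M w u J \<delta>" and "J' \<noteq> {}" and "J' \<subseteq> J"
  shows "rho M J' w u \<le> enat (sum \<delta> J')"
  using assms by (cases "J' = J") (auto simp: rho_split_def)

lemma QNGDM_ex_rho_split:
  "\<lbrakk>QNGDM M; J \<noteq> {}; w \<in> W M; u \<in> W M; rho M J w u \<noteq> \<infinity>\<rbrakk> \<Longrightarrow> \<exists>\<delta>. rho_split M w u J \<delta>"
  unfolding QNGDM_def rho_split_def by blast

lemma QNGDM_doxsum_le_rho:
  "\<lbrakk>QNGDM M; J \<noteq> {}; w \<in> W M; u \<in> W M; rho M J w u \<noteq> \<infinity>\<rbrakk> \<Longrightarrow> doxsum M J w u \<le> rho M J w u"
  unfolding QNGDM_def by blast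

locale qngdm_expansion =
  fixes M :: "('agt::finite, 'w) model" and N :: nat and c :: "'w \<times> 'agt set \<Rightarrow> nat"
  assumes finite_M: "finite_model M" and QNGDM_M: "QNGDM M"
    and inj_c: "inj_on c (W M \<times> {J. J \<noteq> {}})"
    and support_atoms: "\<lbrakk>w \<in> W M; a \<in> support M w\<rbrakk> \<Longrightarrow> atoms0 a \<subseteq> {..<N}"
begin

definition worlds :: "('w \<times> 'agt set) set" where
  "worlds = W M \<times> {J. J \<noteq> {}}"

definition fresh :: "'w \<times> 'agt set \<Rightarrow> 'agt fm0" where
  "fresh y = Neg0 (Atom (N + c y))"

definition share :: "'w \<Rightarrow> 'w \<Rightarrow> 'agt set \<Rightarrow> 'agt \<Rightarrow> nat" where
  "share w u J = (SOME \<delta>. rho_split M w u J \<delta>)"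

(* Infinite budgets put every copy (u, Y) with J not contained in Y at infinite J-distance. *)
definition budget :: "'w \<Rightarrow> 'w \<Rightarrow> 'agt set \<Rightarrow> 'agt \<Rightarrow> enat" where
  "budget w u J i = (if rho M J w u \<noteq> \<infinity> \<and> i \<in> J then enat (share w u J i) else \<infinity>)"

definition false_weight :: "'agt \<Rightarrow> 'w \<Rightarrow> 'w \<Rightarrow> enat" where
  "false_weight i w u = (\<Sum>a \<in> {a \<in> support M w. \<not> sat0 M u a}. D M i w a)"

definition fresh_weight :: "'agt \<Rightarrow> 'w \<Rightarrow> 'w \<times> 'agt set \<Rightarrow> enat" where
  "fresh_weight i w y = budget w (fst y) (snd y) i - false_weight i w (fst y)"

(* rho is given in closed form; doxsum_expansion shows that it is the notional distance. *)
definition expansion :: "('agt, 'w \<times> 'agt set) model" where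
  "expansion = \<lparr>W = worlds,
     D = (\<lambda>i x a. if a \<in> fresh ` worlds then fresh_weight i (fst x) (inv_into worlds fresh a)
                  else D M i (fst x) a),
     rho = (\<lambda>J x y. \<Sum>i\<in>J.
              max (false_weight i (fst x) (fst y)) (budget (fst x) (fst y) (snd y) i)),
     V = (\<lambda>p. {y. if p < N then fst y \<in> V M p else p = N + c y})\<rparr>"

lemma W_expansion [simp]: "W expansion = worlds"
  by (simp add: expansion_def)

lemma fst_in_W: "x \<in> worlds \<Longrightarrow> fst x \<in> W M"
  by (auto simp: worlds_def)

lemma inj_on_c_worlds: "inj_on c worlds"
  using inj_c by (simp add: worlds_def)

lemma inj_on_fresh: "inj_on fresh worlds"
  by (rule inj_onI) (simp add: fresh_def inj_on_eq_iff[OF inj_on_c_worlds])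

lemma fresh_notin_old: "atoms0 a \<subseteq> {..<N} \<Longrightarrow> a \<notin> fresh ` worlds"
  by (auto simp: fresh_def)

lemma D_expansion_fresh: "y \<in> worlds \<Longrightarrow> D expansion i x (fresh y) = fresh_weight i (fst x) y"
  using inj_on_fresh by (simp add: expansion_def)

lemma D_expansion_old: "atoms0 a \<subseteq> {..<N} \<Longrightarrow> D expansion i x a = D M i (fst x) a"
  using fresh_notin_old[of a] by (simp add: expansion_def)

lemma sat0_expansion_old: "atoms0 a \<subseteq> {..<N} \<Longrightarrow> sat0 expansion x a \<longleftrightarrow> sat0 M (fst x) a"
proof (induction a)
  case (Atom p)
  then show ?case by (simp add: expansion_def)
next
  case (Tri i k a)
  then show ?case by (simp add: D_expansion_old)
qed simp_all

lemma sat0_expansion_fresh: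
  "y \<in> worlds \<Longrightarrow> y' \<in> worlds \<Longrightarrow> sat0 expansion y (fresh y') \<longleftrightarrow> y \<noteq> y'"
  by (simp add: expansion_def fresh_def inj_on_eq_iff[OF inj_on_c_worlds] eq_commute)

lemma rho_split_share:
  "\<lbrakk>J \<noteq> {}; w \<in> W M; u \<in> W M; rho M J w u \<noteq> \<infinity>\<rbrakk> \<Longrightarrow> rho_split M w u J (share w u J)"
  unfolding share_def by (rule someI_ex[of "rho_split M w u J"], rule QNGDM_ex_rho_split[OF QNGDM_M])

lemma doxsum_eq_sum_false_weight:
  assumes "w \<in> W M"
  shows "doxsum M J w u = (\<Sum>i\<in>J. false_weight i w u)"
  unfolding false_weight_def
proof (rule doxsum_eq_sum)
  show "finite {a \<in> support M w. \<not> sat0 M u a}"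
    using finite_support[OF finite_M assms] by simp
qed (auto simp: support_def zero_less_iff_neq_zero)

lemma doxsum_expansion:
  assumes x: "x \<in> worlds" and y: "y \<in> worlds"
  shows "doxsum expansion J x y = rho expansion J x y"
proof -
  define B where "B = {a \<in> support M (fst x). \<not> sat0 M (fst y) a}"
  have old: "atoms0 a \<subseteq> {..<N}" if "a \<in> support M (fst x)" for a
    using support_atoms[OF fst_in_W[OF x] that] .
  have "finite B"
    using finite_support[OF finite_M fst_in_W[OF x]] by (simp add: B_def)
  have "fresh y \<notin> B"
    using old fresh_notin_old y unfolding B_def by blast
  have "doxsum expansion J x y = (\<Sum>i\<in>J. \<Sum>a\<in>insert (fresh y) B. D expansion i x a)"
  proof (rule doxsum_eq_sum)
    show "a \<in> insert (fresh y) B"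
      if a: "wf0 a" "\<not> sat0 expansion y a" "D expansion i x a \<noteq> 0" for a i
    proof (cases "a \<in> fresh ` worlds")
      case True
      then show ?thesis using a(2) sat0_expansion_fresh[OF y] by auto
    next
      case False
      then have "a \<in> support M (fst x)"
        using a(1,3) by (auto simp: expansion_def support_def zero_less_iff_neq_zero)
      then show ?thesis
        using a(2) old sat0_expansion_old unfolding B_def by blast
    qed
    show "wf0 a \<and> \<not> sat0 expansion y a" if "a \<in> insert (fresh y) B" for a
    proof (cases "a = fresh y")
      case True
      then show ?thesis using sat0_expansion_fresh[OF y y] by (simp add: fresh_def)
    next
      case False
      then have "a \<in> support M (fst x)" and "\<not> sat0 M (fst y) a"
        using that by (auto simp: B_def)
      then show ?thesis using sat0_expansion_old[OF old] by (simp add: support_def)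
    qed
  qed (simp_all add: \<open>finite B\<close>)
  also have "\<dots> = (\<Sum>i\<in>J. false_weight i (fst x) (fst y) + fresh_weight i (fst x) y)"
  proof (rule sum.cong[OF refl])
    fix i
    have "(\<Sum>a\<in>B. D expansion i x a) = false_weight i (fst x) (fst y)"
      unfolding false_weight_def B_def using old by (simp add: D_expansion_old)
    then show "(\<Sum>a\<in>insert (fresh y) B. D expansion i x a) =
        false_weight i (fst x) (fst y) + fresh_weight i (fst x) y"
      using \<open>finite B\<close> \<open>fresh y \<notin> B\<close> by (simp add: D_expansion_fresh[OF y] add.commute)
  qed
  also have "\<dots> = rho expansion J x y"
    by (simp add: expansion_def fresh_weight_def enat_add_diff_eq_max)
  finally show ?thesis .
qed

lemma NGDM_expansion: "NGDM expansion"
  by (simp add: NGDM_def doxsum_expansion)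

lemma finite_model_expansion: "finite_model expansion"
  unfolding finite_model_def
proof (intro conjI allI ballI)
  show "finite (W expansion)"
    using finite_M by (simp add: worlds_def finite_model_def)
next
  fix i x assume "x \<in> W expansion"
  have "{a. wf0 a \<and> 0 < D expansion i x a} \<subseteq> support M (fst x) \<union> fresh ` worlds"
    by (auto simp: expansion_def support_def)
  moreover have "finite (support M (fst x) \<union> fresh ` worlds)"
    using finite_support[OF finite_M] fst_in_W \<open>x \<in> W expansion\<close> finite_M
    by (simp add: worlds_def finite_model_def)
  ultimately show "finite {a. wf0 a \<and> 0 < D expansion i x a}"
    by (rule finite_subset)
qed

lemma rho_le_sum_budget:
  assumes J: "J \<noteq> {}" and w: "w \<in> W M" and u: "u \<in> W M" and Y: "Y \<noteq> {}"
  shows "rho M J w u \<le> (\<Sum>i\<in>J. budget w u Y i)"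
proof (cases "rho M Y w u \<noteq> \<infinity> \<and> J \<subseteq> Y")
  case True
  then have "(\<Sum>i\<in>J. budget w u Y i) = (\<Sum>i\<in>J. enat (share w u Y i))"
    by (intro sum.cong) (auto simp: budget_def)
  also have "\<dots> = enat (sum (share w u Y) J)"
    by (rule sum_enat)
  finally show ?thesis
    using rho_le_sum_rho_split[OF rho_split_share[OF Y w u] J] True by simp
next
  case False
  then obtain i where "i \<in> J" and "rho M Y w u = \<infinity> \<or> i \<notin> Y"
    using J by (metis all_not_in_conv subsetI)
  then have "budget w u Y i = \<infinity>"
    by (auto simp: budget_def)
  with \<open>i \<in> J\<close> show ?thesis
    by (simp add: sum_enat_eq_infinity)
qed

lemma rho_le_rho_expansion:
  assumes "J \<noteq> {}" and "x \<in> worlds" and "y \<in> worlds"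
  shows "rho M J (fst x) (fst y) \<le> rho expansion J x y"
proof -
  have "rho M J (fst x) (fst y) \<le> (\<Sum>i\<in>J. budget (fst x) (fst y) (snd y) i)"
    using assms by (intro rho_le_sum_budget) (auto simp: worlds_def)
  also have "\<dots> \<le> rho expansion J x y"
    by (auto simp: expansion_def intro: sum_mono)
  finally show ?thesis .
qed

lemma false_weight_le_budget:
  assumes i: "i \<in> J" and w: "w \<in> W M" and u: "u \<in> W M" and fin: "rho M J w u \<noteq> \<infinity>"
  shows "false_weight i w u \<le> budget w u J i"
proof -
  have "rho M {i} w u \<le> enat (share w u J i)"
    using rho_le_sum_rho_split[OF rho_split_share[OF _ w u fin], of "{i}"] i by auto
  moreover from this have "doxsum M {i} w u \<le> rho M {i} w u"
    by (intro QNGDM_doxsum_le_rho[OF QNGDM_M _ w u]) (auto dest: enat_ile)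
  ultimately show ?thesis
    using doxsum_eq_sum_false_weight[OF w, of "{i}" u] i fin by (simp add: budget_def)
qed

lemma rho_expansion_eq_rho:
  assumes J: "J \<noteq> {}" and x: "x \<in> worlds" and u: "u \<in> W M" and fin: "rho M J (fst x) u \<noteq> \<infinity>"
  shows "rho expansion J x (u, J) = rho M J (fst x) u"
proof -
  have "rho expansion J x (u, J) = (\<Sum>i\<in>J. max (false_weight i (fst x) u) (budget (fst x) u J i))"
    by (simp add: expansion_def)
  also have "\<dots> = (\<Sum>i\<in>J. enat (share (fst x) u J i))"
    using false_weight_le_budget[OF _ fst_in_W[OF x] u fin] fin
    by (intro sum.cong) (auto simp: max_absorb2 budget_def)
  also have "\<dots> = enat (sum (share (fst x) u J) J)"
    by (rule sum_enat)
  also have "\<dots> = rho M J (fst x) u"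
    using rho_split_share[OF J fst_in_W[OF x] u fin] by (simp add: rho_split_def)
  finally show ?thesis .
qed

lemma sat_expansion:
  "\<lbrakk>wf \<phi>; atoms \<phi> \<subseteq> {..<N}; x \<in> worlds\<rbrakk> \<Longrightarrow> sat expansion x \<phi> \<longleftrightarrow> sat M (fst x) \<phi>"
proof (induction \<phi> arbitrary: x)
  case (Base a)
  then show ?case by (simp add: sat0_expansion_old)
next
  case (Box J k \<phi>)
  then have J: "J \<noteq> {}" and IH: "\<And>y. y \<in> worlds \<Longrightarrow> sat expansion y \<phi> \<longleftrightarrow> sat M (fst y) \<phi>"
    by auto
  show ?case
  proof
    assume expansion_sat: "sat expansion x (Box J k \<phi>)"
    show "sat M (fst x) (Box J k \<phi>)"
      unfolding sat.simps
    proof (intro ballI impI)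
      fix u assume u: "u \<in> W M" and le: "rho M J (fst x) u \<le> enat k"
      then have "rho expansion J x (u, J) \<le> enat k"
        using rho_expansion_eq_rho[OF J \<open>x \<in> worlds\<close> u] enat_ile[OF le] by auto
      moreover have "(u, J) \<in> worlds"
        using u J by (simp add: worlds_def)
      ultimately show "sat M u \<phi>"
        using expansion_sat IH by auto
    qed
  next
    assume M_sat: "sat M (fst x) (Box J k \<phi>)"
    show "sat expansion x (Box J k \<phi>)"
      unfolding sat.simps W_expansion
    proof (intro ballI impI)
      fix y assume y: "y \<in> worlds" and le: "rho expansion J x y \<le> enat k"
      have "rho M J (fst x) (fst y) \<le> enat k"
        using rho_le_rho_expansion[OF J \<open>x \<in> worlds\<close> y] le by (rule order_trans)
      then show "sat expansion y \<phi>"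
        using M_sat IH y fst_in_W by auto
    qed
  qed
qed auto

end

definition rename_worlds :: "('w \<Rightarrow> 'v) \<Rightarrow> ('agt, 'w) model \<Rightarrow> ('agt, 'v) model" where
  "rename_worlds f M = \<lparr>W = f ` W M, D = (\<lambda>i v. D M i (inv_into (W M) f v)),
     rho = (\<lambda>J v v'. rho M J (inv_into (W M) f v) (inv_into (W M) f v')),
     V = (\<lambda>p. f ` (V M p \<inter> W M))\<rparr>"

lemma W_rename_worlds [simp]: "W (rename_worlds f M) = f ` W M"
  by (simp add: rename_worlds_def)

context
  fixes f :: "'w \<Rightarrow> 'v" and M :: "('agt, 'w) model"
  assumes inj: "inj_on f (W M)"
begin

lemma D_rename_worlds: "w \<in> W M \<Longrightarrow> D (rename_worlds f M) i (f w) = D M i w"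
  using inj by (simp add: rename_worlds_def)

lemma rho_rename_worlds:
  "w \<in> W M \<Longrightarrow> u \<in> W M \<Longrightarrow> rho (rename_worlds f M) J (f w) (f u) = rho M J w u"
  using inj by (simp add: rename_worlds_def)

lemma sat0_rename_worlds: "w \<in> W M \<Longrightarrow> sat0 (rename_worlds f M) (f w) a \<longleftrightarrow> sat0 M w a"
  by (induction a) (use inj in \<open>auto simp: rename_worlds_def inj_on_image_mem_iff\<close>)

lemma sat_rename_worlds: "w \<in> W M \<Longrightarrow> sat (rename_worlds f M) (f w) \<phi> \<longleftrightarrow> sat M w \<phi>"
proof (induction \<phi> arbitrary: w)
  case (Box J k \<phi>)
  have "sat (rename_worlds f M) (f w) (Box J k \<phi>) \<longleftrightarrow>
      (\<forall>u\<in>W M. rho (rename_worlds f M) J (f w) (f u) \<le> enat k \<longrightarrow> sat (rename_worlds f M) (f u) \<phi>)"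
    by simp
  also have "\<dots> \<longleftrightarrow> sat M w (Box J k \<phi>)"
    using Box by (simp add: rho_rename_worlds)
  finally show ?case .
qed (simp_all add: sat0_rename_worlds)

lemma doxsum_rename_worlds:
  "w \<in> W M \<Longrightarrow> u \<in> W M \<Longrightarrow> doxsum (rename_worlds f M) J (f w) (f u) = doxsum M J w u"
  by (simp add: doxsum_def D_rename_worlds sat0_rename_worlds)

lemma finite_model_rename_worlds:
  assumes "finite_model M"
  shows "finite_model (rename_worlds f M)"
  unfolding finite_model_def
proof (intro conjI allI ballI)
  show "finite (W (rename_worlds f M))"
    using assms by (simp add: finite_model_def)
next
  fix i v assume "v \<in> W (rename_worlds f M)"
  then obtain w where "w \<in> W M" and "v = f w" by auto
  then show "finite {a. wf0 a \<and> 0 < D (rename_worlds f M) i v a}"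
    using assms by (simp add: finite_model_def D_rename_worlds)
qed

lemma NGDM_rename_worlds:
  assumes "NGDM M"
  shows "NGDM (rename_worlds f M)"
  unfolding NGDM_def
proof (intro allI impI)
  fix J :: "'agt set" and v v'
  assume "J \<noteq> {}" and "v \<in> W (rename_worlds f M)" and "v' \<in> W (rename_worlds f M)"
  then obtain w u where "w \<in> W M" "u \<in> W M" "v = f w" "v' = f u" by auto
  have "rho (rename_worlds f M) J (f w) (f u) = rho M J w u"
    using \<open>w \<in> W M\<close> \<open>u \<in> W M\<close> by (rule rho_rename_worlds)
  also have "\<dots> = doxsum M J w u"
    using assms \<open>J \<noteq> {}\<close> \<open>w \<in> W M\<close> \<open>u \<in> W M\<close> unfolding NGDM_def by blast
  also have "\<dots> = doxsum (rename_worlds f M) J (f w) (f u)"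
    using \<open>w \<in> W M\<close> \<open>u \<in> W M\<close> by (rule doxsum_rename_worlds[symmetric])
  finally show "rho (rename_worlds f M) J v v' = doxsum (rename_worlds f M) J v v'"
    using \<open>v = f w\<close> \<open>v' = f u\<close> by simp
qed

end

lemma finite_NGDM_nat_worlds:
  fixes M :: "('agt, 'w) model"
  assumes "finite_model M" and "NGDM M" and "w \<in> W M" and "sat M w \<phi>"
  shows "\<exists>(M' :: ('agt, nat) model) w'. finite_model M' \<and> NGDM M' \<and> w' \<in> W M' \<and> sat M' w' \<phi>"
proof -
  have "finite (W M)"
    using assms(1) by (simp add: finite_model_def)
  from finite_imp_inj_to_nat_seg[OF this]
  obtain f :: "'w \<Rightarrow> nat" where f: "inj_on f (W M)"
    by (elim exE conjE)
  show ?thesis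
  proof (intro exI conjI)
    show "finite_model (rename_worlds f M)"
      using finite_model_rename_worlds[OF f assms(1)] .
    show "NGDM (rename_worlds f M)"
      using NGDM_rename_worlds[OF f assms(2)] .
    show "f w \<in> W (rename_worlds f M)"
      using assms(3) by simp
    show "sat (rename_worlds f M) (f w) \<phi>"
      using sat_rename_worlds[OF f assms(3)] assms(4) by simp
  qed
qed

theorem lemma2:
  fixes \<phi> :: "('agt::finite) fm" and M :: "('agt, 'w) model" and w :: 'w
  assumes "wf \<phi>" and "finite_model M" and "QNGDM M" and "w \<in> W M" and "sat M w \<phi>"
  shows "\<exists>(M'' :: ('agt, nat) model) w''. finite_model M'' \<and> NGDM M'' \<and> w'' \<in> W M'' \<and> sat M'' w'' \<phi>"
proof -
  have "finite (W M)"
    using assms(2) by (simp add: finite_model_def)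
  then have "finite (atoms \<phi> \<union> (\<Union>v\<in>W M. \<Union>a\<in>support M v. atoms0 a))"
    using finite_support[OF assms(2)] by simp
  then obtain N where N: "atoms \<phi> \<union> (\<Union>v\<in>W M. \<Union>a\<in>support M v. atoms0 a) \<subseteq> {..<N}"
    using finite_nat_bounded by blast
  have finite_worlds: "finite (W M \<times> {J :: 'agt set. J \<noteq> {}})"
    using \<open>finite (W M)\<close> by simp
  from finite_imp_inj_to_nat_seg[OF finite_worlds]
  obtain c :: "'w \<times> 'agt set \<Rightarrow> nat" where c: "inj_on c (W M \<times> {J. J \<noteq> {}})"
    by (elim exE conjE)
  interpret qngdm_expansion M N c
    using assms(2,3) c N by unfold_locales blast+
  have "(w, UNIV) \<in> worlds"
    using assms(4) by (simp add: worlds_def)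
  moreover have "sat expansion (w, UNIV) \<phi>"
    using sat_expansion[OF assms(1) _ \<open>(w, UNIV) \<in> worlds\<close>] N assms(5) by auto
  ultimately show ?thesis
    using finite_NGDM_nat_worlds[OF finite_model_expansion NGDM_expansion] by simp
qed

end
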